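(* A group $G$ is GCA-surjunctive if and only if $G$ is Hopfian and surjunctive.
   Context: For a finite set $A$ and a group $G$, $A^G$ is the set of functions $G\to A$ with shift action $(g\cdot x)(k):=x(g^{-1}k)$. For $\phi\in\mathrm{End}(G)$, a $\phi$-cellular automaton $A^G\to A^G$ is a map $\mathcal{T}$ for which there exist a finite $T\subseteq G$ and $\mu:A^T\to A$ with $\mathcal{T}(x)(h)=\mu((\phi(h^{-1})\cdot x)|_T)$ for all $x\in A^G,h\in G$; classical cellular automata are the $\mathrm{id}$-cellular automata. $\mathrm{GCA}(A^G)$ is the set of all $\phi$-cellular automata $A^G\to A^G$ over all $\phi\in\mathrm{End}(G)$. $G$ is surjunctive if for every finite set $A$, every injective classical cellular automaton $A^G\to A^G$ is surjective. $G$ is GCA-surjunctive if for every finite set $A$, every injective $\mathcal{T}\in\mathrm{GCA}(A^G)$ is surjective. $G$ is Hopfian if every surjective endomorphism of $G$ is injective. *)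

theory Defs
  imports "HOL-Algebra.Group"
begin

definition configs :: "('g, 'm) monoid_scheme \<Rightarrow> nat set \<Rightarrow> ('g \<Rightarrow> nat) set" where
  "configs G A = (carrier G \<rightarrow>\<^sub>E A)"

definition shift :: "('g, 'm) monoid_scheme \<Rightarrow> 'g \<Rightarrow> ('g \<Rightarrow> nat) \<Rightarrow> ('g \<Rightarrow> nat)" where
  "shift G g x = (\<lambda>k\<in>carrier G. x (inv\<^bsub>G\<^esub> g \<otimes>\<^bsub>G\<^esub> k))"

definition is_phi_CA ::
  "('g, 'm) monoid_scheme \<Rightarrow> nat set \<Rightarrow> ('g \<Rightarrow> 'g) \<Rightarrow> (('g \<Rightarrow> nat) \<Rightarrow> ('g \<Rightarrow> nat)) \<Rightarrow> bool" where
  "is_phi_CA G A \<phi> \<tau> \<longleftrightarrow>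
     (\<exists>T \<mu>. finite T \<and> T \<subseteq> carrier G \<and> \<mu> \<in> (T \<rightarrow>\<^sub>E A) \<rightarrow> A \<and>
        (\<forall>x\<in>configs G A. \<tau> x = (\<lambda>h\<in>carrier G. \<mu> (restrict (shift G (\<phi> (inv\<^bsub>G\<^esub> h)) x) T))))"

definition is_GCA :: "('g, 'm) monoid_scheme \<Rightarrow> nat set \<Rightarrow> (('g \<Rightarrow> nat) \<Rightarrow> ('g \<Rightarrow> nat)) \<Rightarrow> bool" where
  "is_GCA G A \<tau> \<longleftrightarrow> (\<exists>\<phi>\<in>hom G G. is_phi_CA G A \<phi> \<tau>)"

definition surjunctive :: "('g, 'm) monoid_scheme \<Rightarrow> bool" where
  "surjunctive G \<longleftrightarrow>
     (\<forall>A::nat set. finite A \<longrightarrow> (\<forall>\<tau>. is_phi_CA G A id \<tau> \<and> inj_on \<tau> (configs G A)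
        \<longrightarrow> \<tau> ` configs G A = configs G A))"

definition GCA_surjunctive :: "('g, 'm) monoid_scheme \<Rightarrow> bool" where
  "GCA_surjunctive G \<longleftrightarrow>
     (\<forall>A::nat set. finite A \<longrightarrow> (\<forall>\<tau>. is_GCA G A \<tau> \<and> inj_on \<tau> (configs G A)
        \<longrightarrow> \<tau> ` configs G A = configs G A))"

definition hopfian :: "('g, 'm) monoid_scheme \<Rightarrow> bool" where
  "hopfian G \<longleftrightarrow> (\<forall>\<phi>\<in>hom G G. \<phi> ` carrier G = carrier G \<longrightarrow> inj_on \<phi> (carrier G))"

end

theory Submission
  imports Defs
begin

text \<open>Every \<open>\<phi>\<close>-cellular automaton factors as \<open>x \<mapsto> \<sigma>(x) \<circ> \<phi>\<close> with \<open>\<sigma>\<close> the classical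
  cellular automaton having the same memory set and local rule. Precomposition with \<open>\<phi>\<close> is
  injective on \<open>A\<^sup>G\<close> iff \<open>\<phi>\<close> is surjective and (for \<open>|A| \<ge> 2\<close>) surjective iff \<open>\<phi>\<close> is injective.
  Hence GCA-surjunctivity applied to \<open>x \<mapsto> x \<circ> \<phi>\<close> gives the Hopf property, and conversely an
  injective \<open>\<phi>\<close>-cellular automaton forces \<open>\<sigma>\<close> to be injective, so surjective by surjunctivity,
  and then \<open>\<phi>\<close> to be surjective, so bijective by the Hopf property.\<close>

definition precomp :: "('g, 'm) monoid_scheme \<Rightarrow> ('g \<Rightarrow> 'g) \<Rightarrow> ('g \<Rightarrow> 'a) \<Rightarrow> ('g \<Rightarrow> 'a)" where
  "precomp G \<phi> y = (\<lambda>h\<in>carrier G. y (\<phi> h))"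

lemma configs_eqI:
  assumes "x \<in> configs G A" "y \<in> configs G A" "\<And>k. k \<in> carrier G \<Longrightarrow> x k = y k"
  shows "x = y"
  using assms unfolding configs_def by (rule PiE_ext)

lemma configs_subsingleton:
  assumes "\<And>a b. a \<in> A \<Longrightarrow> b \<in> A \<Longrightarrow> a = b" "x \<in> configs G A" "y \<in> configs G A"
  shows "x = y"
  using assms(2,3) by (rule configs_eqI) (use assms in \<open>auto simp: configs_def\<close>)

lemma precomp_in_configs:
  assumes "\<phi> ` carrier G \<subseteq> carrier G" "y \<in> configs G A"
  shows "precomp G \<phi> y \<in> configs G A"
  using assms by (auto simp: precomp_def configs_def)

lemma precomp_is_phi_CA:
  assumes "group G" "\<phi> \<in> hom G G"
  shows "is_phi_CA G A \<phi> (precomp G \<phi>)"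
proof -
  interpret group_hom G G \<phi>
    using assms by (simp add: group_hom_def group_hom_axioms_def)
  have "precomp G \<phi> x =
      (\<lambda>h\<in>carrier G. restrict (shift G (\<phi> (inv\<^bsub>G\<^esub> h)) x) {\<one>\<^bsub>G\<^esub>} \<one>\<^bsub>G\<^esub>)" for x
    by (auto simp: precomp_def shift_def)
  then show ?thesis
    unfolding is_phi_CA_def
    by (intro exI[of _ "{\<one>\<^bsub>G\<^esub>}"] exI[of _ "\<lambda>f. f \<one>\<^bsub>G\<^esub>"]) auto
qed

lemma phi_CA_factors_through_CA:
  assumes "group G" "\<phi> \<in> hom G G" "is_phi_CA G A \<phi> \<tau>"
  obtains \<sigma> where "is_phi_CA G A id \<sigma>" "\<And>x. x \<in> configs G A \<Longrightarrow> \<tau> x = precomp G \<phi> (\<sigma> x)"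
proof -
  interpret group_hom G G \<phi>
    using assms by (simp add: group_hom_def group_hom_axioms_def)
  obtain T \<mu> where "finite T" "T \<subseteq> carrier G" "\<mu> \<in> (T \<rightarrow>\<^sub>E A) \<rightarrow> A"
    and \<tau>: "\<And>x. x \<in> configs G A \<Longrightarrow>
      \<tau> x = (\<lambda>h\<in>carrier G. \<mu> (restrict (shift G (\<phi> (inv\<^bsub>G\<^esub> h)) x) T))"
    using assms(3) unfolding is_phi_CA_def by blast
  define \<sigma> where "\<sigma> x = (\<lambda>g\<in>carrier G. \<mu> (restrict (shift G (inv\<^bsub>G\<^esub> g) x) T))" for x
  show ?thesis
  proof
    show "is_phi_CA G A id \<sigma>"
      unfolding is_phi_CA_def using \<open>finite T\<close> \<open>T \<subseteq> carrier G\<close> \<open>\<mu> \<in> (T \<rightarrow>\<^sub>E A) \<rightarrow> A\<close>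
      by (auto simp: \<sigma>_def)
    \<comment> \<open>\<open>\<phi> (h\<inverse>) = (\<phi> h)\<inverse>\<close>, so \<open>\<tau> x h = \<sigma> x (\<phi> h)\<close>\<close>
    show "\<tau> x = precomp G \<phi> (\<sigma> x)" if "x \<in> configs G A" for x
      using \<tau>[OF that] by (auto simp: precomp_def \<sigma>_def)
  qed
qed

lemma inj_on_precomp_if_surj:
  assumes "\<phi> ` carrier G = carrier G"
  shows "inj_on (precomp G \<phi>) (configs G A)"
proof (rule inj_onI)
  fix x y assume x: "x \<in> configs G A" and y: "y \<in> configs G A"
    and eq: "precomp G \<phi> x = precomp G \<phi> y"
  show "x = y"
  proof (rule configs_eqI[OF x y])
    fix k assume "k \<in> carrier G"
    then obtain h where "h \<in> carrier G" "k = \<phi> h" using assms by blast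
    then show "x k = y k" using fun_cong[OF eq, of h] by (simp add: precomp_def)
  qed
qed

lemma surj_if_inj_on_precomp:
  assumes "a \<in> A" "b \<in> A" "a \<noteq> b" "\<phi> ` carrier G \<subseteq> carrier G"
    and inj: "inj_on (precomp G \<phi>) (configs G A)"
  shows "\<phi> ` carrier G = carrier G"
proof (rule ccontr)
  assume "\<phi> ` carrier G \<noteq> carrier G"
  with assms(4) obtain g where g: "g \<in> carrier G" "g \<notin> \<phi> ` carrier G" by blast
  define x where "x = (\<lambda>k\<in>carrier G. a)"
  define y where "y = x(g := b)"
  have "x \<in> configs G A" "y \<in> configs G A"
    using assms g by (auto simp: x_def y_def configs_def)
  moreover have "precomp G \<phi> x = precomp G \<phi> y"
    unfolding precomp_def y_def using g by (intro restrict_ext) auto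
  ultimately have "x = y" using inj by (simp add: inj_on_def)
  then have "x g = y g" by simp
  then show False using g assms(3) by (simp add: x_def y_def)
qed

lemma precomp_image_configs:
  assumes bij: "bij_betw \<phi> (carrier G) (carrier G)"
  shows "precomp G \<phi> ` configs G A = configs G A"
proof
  have \<phi>_carrier: "\<phi> ` carrier G = carrier G"
    using bij by (rule bij_betw_imp_surj_on)
  then show "precomp G \<phi> ` configs G A \<subseteq> configs G A"
    using precomp_in_configs[of \<phi> G] by (simp add: image_subsetI)
  show "configs G A \<subseteq> precomp G \<phi> ` configs G A"
  proof
    fix z assume z: "z \<in> configs G A"
    define y where "y = (\<lambda>g\<in>carrier G. z (inv_into (carrier G) \<phi> g))"
    have "y \<in> configs G A"
      using z bij_betw_apply[OF bij_betw_inv_into[OF bij]] by (auto simp: y_def configs_def)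
    moreover have "precomp G \<phi> y = z"
    proof (rule configs_eqI)
      show "precomp G \<phi> y \<in> configs G A"
        using \<phi>_carrier \<open>y \<in> configs G A\<close> by (simp add: precomp_in_configs)
      fix k assume "k \<in> carrier G"
      then have "\<phi> k \<in> carrier G" using \<phi>_carrier by blast
      then show "precomp G \<phi> y k = z k"
        using \<open>k \<in> carrier G\<close> bij_betw_inv_into_left[OF bij \<open>k \<in> carrier G\<close>]
        by (simp add: precomp_def y_def)
    qed (fact z)
    ultimately show "z \<in> precomp G \<phi> ` configs G A" by blast
  qed
qed

lemma precomp_image_neq_configs_if_not_inj:
  assumes "a \<in> A" "b \<in> A" "a \<noteq> b" "\<not> inj_on \<phi> (carrier G)"
  shows "precomp G \<phi> ` configs G A \<noteq> configs G A"
proof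
  assume image: "precomp G \<phi> ` configs G A = configs G A"
  obtain g h where gh: "g \<in> carrier G" "h \<in> carrier G" "g \<noteq> h" "\<phi> g = \<phi> h"
    using assms(4) unfolding inj_on_def by blast
  define z where "z = (\<lambda>k\<in>carrier G. if k = g then a else b)"
  have "z \<in> configs G A" using assms by (auto simp: z_def configs_def)
  then obtain x where "z = precomp G \<phi> x" using image by blast
  then have "z g = z h" using gh by (simp add: precomp_def)
  then show False using gh assms(3) by (simp add: z_def)
qed

lemma hopfian_if_GCA_surjunctive:
  assumes "group G" "GCA_surjunctive G"
  shows "hopfian G"
  unfolding hopfian_def
proof (intro ballI impI)
  fix \<phi> assume \<phi>: "\<phi> \<in> hom G G" and surj: "\<phi> ` carrier G = carrier G"
  have "is_GCA G {0, 1} (precomp G \<phi>)"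
    using precomp_is_phi_CA[OF assms(1) \<phi>] \<phi> unfolding is_GCA_def by blast
  moreover have "inj_on (precomp G \<phi>) (configs G {0, 1})"
    using surj by (rule inj_on_precomp_if_surj)
  ultimately have "precomp G \<phi> ` configs G {0, 1} = configs G {0, 1}"
    using assms(2) unfolding GCA_surjunctive_def by simp
  moreover have "\<not> inj_on \<phi> (carrier G) \<Longrightarrow> precomp G \<phi> ` configs G {0, 1} \<noteq> configs G {0, 1}"
    by (rule precomp_image_neq_configs_if_not_inj[of 0 _ 1]) simp_all
  ultimately show "inj_on \<phi> (carrier G)" by blast
qed

lemma surjunctive_if_GCA_surjunctive:
  assumes "GCA_surjunctive G"
  shows "surjunctive G"
proof -
  have "id \<in> hom G G" by (simp add: hom_def)
  with assms show ?thesis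
    unfolding GCA_surjunctive_def surjunctive_def is_GCA_def by blast
qed

lemma GCA_surjunctive_if_hopfian_surjunctive:
  assumes G: "group G" and hopf: "hopfian G" and surjunctive: "surjunctive G"
  shows "GCA_surjunctive G"
  unfolding GCA_surjunctive_def
proof (intro allI impI, elim conjE)
  fix A :: "nat set" and \<tau>
  assume "finite A" "is_GCA G A \<tau>" and inj: "inj_on \<tau> (configs G A)"
  then obtain \<phi> where \<phi>: "\<phi> \<in> hom G G" "is_phi_CA G A \<phi> \<tau>" by (auto simp: is_GCA_def)
  then have \<phi>_into: "\<phi> ` carrier G \<subseteq> carrier G" by (auto simp: hom_in_carrier)
  obtain \<sigma> where \<sigma>: "is_phi_CA G A id \<sigma>"
    and \<tau>: "\<And>x. x \<in> configs G A \<Longrightarrow> \<tau> x = precomp G \<phi> (\<sigma> x)"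
    using phi_CA_factors_through_CA[OF G \<phi>] by blast
  have \<tau>_image: "\<tau> ` configs G A = precomp G \<phi> ` \<sigma> ` configs G A"
    using \<tau> by (simp add: image_image cong: image_cong)
  have inj_comp: "inj_on (precomp G \<phi> \<circ> \<sigma>) (configs G A)"
    using inj by (simp add: \<tau> cong: inj_on_cong)
  then have "inj_on \<sigma> (configs G A)"
    by (rule inj_on_imageI2)
  then have \<sigma>_surj: "\<sigma> ` configs G A = configs G A"
    using \<sigma> \<open>finite A\<close> surjunctive unfolding surjunctive_def by simp
  show "\<tau> ` configs G A = configs G A"
  proof (cases "\<exists>a\<in>A. \<exists>b\<in>A. a \<noteq> b")
    case False
    have into: "\<tau> ` configs G A \<subseteq> configs G A"
      using \<tau>_image \<sigma>_surj precomp_in_configs[OF \<phi>_into] by auto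
    moreover have "z \<in> \<tau> ` configs G A" if z: "z \<in> configs G A" for z
    proof -
      have "z = \<tau> z"
        using False z into by (blast intro: configs_subsingleton)
      then show ?thesis using z by blast
    qed
    ultimately show ?thesis by blast
  next
    case True
    then obtain a b where ab: "a \<in> A" "b \<in> A" "a \<noteq> b" by blast
    have "inj_on (precomp G \<phi>) (configs G A)"
      using inj_on_imageI[OF inj_comp] \<sigma>_surj by simp
    then have "\<phi> ` carrier G = carrier G"
      using surj_if_inj_on_precomp[OF ab \<phi>_into] by blast
    with hopf \<phi>(1) have "bij_betw \<phi> (carrier G) (carrier G)"
      by (simp add: hopfian_def bij_betw_def)
    then show ?thesis
      using \<tau>_image \<sigma>_surj precomp_image_configs by simp
  qed
qed

theorem proposition2p7:
  fixes G :: "('g, 'm) monoid_scheme"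
  assumes "group G"
  shows "GCA_surjunctive G \<longleftrightarrow> hopfian G \<and> surjunctive G"
  using hopfian_if_GCA_surjunctive[OF assms] surjunctive_if_GCA_surjunctive
    GCA_surjunctive_if_hopfian_surjunctive[OF assms] by blast

end
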